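(* Let $q\ge 2$ and $n\ge 1$ be integers and let $m=n+1$. Under uniform transmission over the $1$-insertion channel with input length $n$, $$\min_{{\boldsymbol y}\in\Sigma_q^{m}} \mathsf{H}^{\mathsf{In}}_{1\text{-}\mathsf{Ins}}({\boldsymbol y}) = 0,$$ and this minimum is attained only by channel outputs having a single run.
   Context: $\Sigma_q=\{0,1,\dots,q-1\}$. For sequences ${\boldsymbol x}$ of length $\ell$ and ${\boldsymbol y}$ of length $N\ge \ell$, the embedding number $\omega_{{\boldsymbol x}}({\boldsymbol y})$ is the number of index tuples $1\le i_1<\dots<i_\ell\le N$ with $y_{i_j}=x_j$ for all $j$. The $k$-insertion channel with input length $n$ maps ${\boldsymbol x}\in\Sigma_q^n$ to ${\boldsymbol y}\in\Sigma_q^{n+k}$ with probability $\Pr\{{\boldsymbol y}\mid{\boldsymbol x}\}=\omega_{{\boldsymbol x}}({\boldsymbol y})/\big(\binom{n+k}{k}q^k\big)$. Under uniform transmission the input $X$ is uniform on $\Sigma_q^n$, and for an output ${\boldsymbol y}$ the input entropy is $\mathsf{H}^{\mathsf{In}}_{k\text{-}\mathsf{Ins}}({\boldsymbol y})=H(X\mid Y={\boldsymbol y})=-\sum_{{\boldsymbol x}}P({\boldsymbol x}\mid{\boldsymbol y})\log_2 P({\boldsymbol x}\mid{\boldsymbol y})$ with $P({\boldsymbol x}\mid {\boldsymbol y})=\Pr\{{\boldsymbol y}\mid{\boldsymbol x}\}/\sum_{{\boldsymbol x}'\in\Sigma_q^n}\Pr\{{\boldsymbol y}\mid{\boldsymbol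 x}'\}$. A run is a maximal block of identical consecutive symbols. *)

theory Defs
  imports Complex_Main
begin

definition seqs :: "nat \<Rightarrow> nat \<Rightarrow> nat list set" where
  "seqs q n = {xs. length xs = n \<and> set xs \<subseteq> {0..<q}}"

text \<open>Embedding number: number of index tuples i_1 < ... < i_l (0-based here)
  with y_{i_j} = x_j.\<close>
definition emb_num :: "nat list \<Rightarrow> nat list \<Rightarrow> nat" where
  "emb_num x y = card {is :: nat list. length is = length x \<and> sorted_wrt (<) is
      \<and> (\<forall>i\<in>set is. i < length y) \<and> (\<forall>j<length x. y ! (is ! j) = x ! j)}"

definition ins_prob :: "nat \<Rightarrow> nat \<Rightarrow> nat list \<Rightarrow> nat list \<Rightarrow> real" where
  "ins_prob q k y x = real (emb_num x y) / (real ((length x + k) choose k) * real q ^ k)"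

text \<open>Posterior P(x | y) under uniform input on Sigma_q^n.\<close>
definition post_prob :: "nat \<Rightarrow> nat \<Rightarrow> nat \<Rightarrow> nat list \<Rightarrow> nat list \<Rightarrow> real" where
  "post_prob q n k y x = ins_prob q k y x / (\<Sum>x'\<in>seqs q n. ins_prob q k y x')"

text \<open>Input entropy H(X | Y = y) (with the convention 0 log 0 = 0).\<close>
definition input_entropy :: "nat \<Rightarrow> nat \<Rightarrow> nat \<Rightarrow> nat list \<Rightarrow> real" where
  "input_entropy q n k y =
     - (\<Sum>x\<in>seqs q n. post_prob q n k y x * log 2 (post_prob q n k y x))"

definition num_runs :: "nat list \<Rightarrow> nat" where
  "num_runs y = (if y = [] then 0
     else 1 + card {i. Suc i < length y \<and> y ! i \<noteq> y ! Suc i})"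

end

theory Submission
  imports Defs "HOL-Library.Sublist"
begin

text \<open>Up to the factor (n+1) q, the posterior of an input x given the output y is its
  embedding number, so H(X | Y = y) is the entropy of the weights omega_x(y). It vanishes
  when only one input embeds into y, as for the constant outputs, and it is positive as soon as two
  inputs do. An output with at least two runs has two adjacent distinct symbols, and deleting either
  of them gives two different inputs that both embed.\<close>

definition weight_entropy :: "('a \<Rightarrow> real) \<Rightarrow> 'a set \<Rightarrow> real" where
  "weight_entropy f A = - (\<Sum>x\<in>A. f x / sum f A * log 2 (f x / sum f A))"

lemma mult_log2_nonpos: "0 \<le> (p::real) \<Longrightarrow> p \<le> 1 \<Longrightarrow> p * log 2 p \<le> 0"
  by (cases "p = 0") (simp_all add: mult_nonneg_nonpos)

lemma mult_log2_neg: "0 < (p::real) \<Longrightarrow> p < 1 \<Longrightarrow> p * log 2 p < 0"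
  by (simp add: mult_pos_neg)

lemma weight_normalized_bounds:
  fixes f :: "'a \<Rightarrow> real"
  assumes "finite A" "\<forall>x\<in>A. 0 \<le> f x" "x \<in> A"
  shows "0 \<le> f x / sum f A" "f x / sum f A \<le> 1"
proof -
  have "f x \<le> sum f A" using assms by (intro member_le_sum) auto
  then show "0 \<le> f x / sum f A" "f x / sum f A \<le> 1"
    using assms by (auto simp: divide_le_eq_1)
qed

lemma weight_entropy_nonneg:
  fixes f :: "'a \<Rightarrow> real"
  assumes "finite A" "\<forall>x\<in>A. 0 \<le> f x"
  shows "0 \<le> weight_entropy f A"
proof -
  have "f x / sum f A * log 2 (f x / sum f A) \<le> 0" if "x \<in> A" for x
    using mult_log2_nonpos weight_normalized_bounds[OF assms that] by blast
  then show ?thesis unfolding weight_entropy_def by (simp add: sum_nonpos del: times_divide_eq_left)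
qed

lemma weight_entropy_pos:
  fixes f :: "'a \<Rightarrow> real"
  assumes "finite A" "\<forall>x\<in>A. 0 \<le> f x"
    and "x1 \<in> A" "x2 \<in> A" "x1 \<noteq> x2" "0 < f x1" "0 < f x2"
  shows "0 < weight_entropy f A"
proof -
  let ?h = "\<lambda>x. f x / sum f A * log 2 (f x / sum f A)"
  have "f x1 + f x2 = sum f {x1, x2}" using \<open>x1 \<noteq> x2\<close> by simp
  also have "\<dots> \<le> sum f A" using assms by (intro sum_mono2) auto
  finally have "f x1 < sum f A" using \<open>0 < f x2\<close> by linarith
  then have "0 < f x1 / sum f A" "f x1 / sum f A < 1"
    using \<open>0 < f x1\<close> by (simp_all add: divide_less_eq_1_pos)
  then have "?h x1 < 0" by (rule mult_log2_neg)
  moreover have "?h x \<le> 0" if "x \<in> A" for x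
    using mult_log2_nonpos weight_normalized_bounds[OF assms(1,2) that] by blast
  ultimately have "sum ?h A < sum (\<lambda>_. 0) A"
    by (intro sum_strict_mono_ex1 \<open>finite A\<close>) (use \<open>x1 \<in> A\<close> in auto)
  then show ?thesis unfolding weight_entropy_def by simp
qed

lemma weight_entropy_eq_0_if_single_support:
  fixes f :: "'a \<Rightarrow> real"
  assumes "finite A" "\<forall>x\<in>A. f x \<noteq> 0 \<longrightarrow> x = z"
  shows "weight_entropy f A = 0"
proof -
  have sum_eq: "sum f A = (if z \<in> A then f z else 0)"
    using assms by (subst sum.mono_neutral_right[of A "A \<inter> {z}"]) auto
  have "f x / sum f A * log 2 (f x / sum f A) = 0" if "x \<in> A" for x
    using assms that sum_eq by (cases "x = z") auto
  then have "(\<Sum>x\<in>A. f x / sum f A * log 2 (f x / sum f A)) = 0"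
    by (intro sum.neutral) blast
  then show ?thesis unfolding weight_entropy_def by simp
qed

definition embeddings :: "nat list \<Rightarrow> nat list \<Rightarrow> nat list set" where
  "embeddings x y = {is. length is = length x \<and> sorted_wrt (<) is
      \<and> (\<forall>i\<in>set is. i < length y) \<and> (\<forall>j<length x. y ! (is ! j) = x ! j)}"

lemma emb_num_eq_card_embeddings: "emb_num x y = card (embeddings x y)"
  unfolding emb_num_def embeddings_def ..

lemma finite_embeddings: "finite (embeddings x y)"
proof (rule finite_subset)
  show "embeddings x y \<subseteq> {is. set is \<subseteq> {0..<length y} \<and> length is = length x}"
    unfolding embeddings_def by auto
qed (rule finite_lists_length_eq, simp)

lemma embeddings_Cons_right:
  "is \<in> embeddings x y \<Longrightarrow> map Suc is \<in> embeddings x (b # y)"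
  unfolding embeddings_def by (auto simp: sorted_wrt_map)

lemma embeddings_Cons_Cons:
  "is \<in> embeddings x y \<Longrightarrow> 0 # map Suc is \<in> embeddings (a # x) (a # y)"
  unfolding embeddings_def by (auto simp: sorted_wrt_map nth_Cons split: nat.split)

lemma subseq_imp_embeddings_nonempty: "subseq x y \<Longrightarrow> embeddings x y \<noteq> {}"
proof (induction rule: list_emb.induct)
  case (list_emb_Nil ys)
  have "[] \<in> embeddings [] ys" by (simp add: embeddings_def)
  then show ?case by blast
next
  case (list_emb_Cons xs ys y)
  then show ?case using embeddings_Cons_right by blast
next
  case (list_emb_Cons2 x y xs ys)
  then show ?case using embeddings_Cons_Cons by blast
qed

lemma subseq_imp_emb_num_pos: "subseq x y \<Longrightarrow> 0 < emb_num x y"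
  using subseq_imp_embeddings_nonempty finite_embeddings
  by (simp add: emb_num_eq_card_embeddings card_gt_0_iff)

lemma emb_num_pos_imp_set_subset:
  assumes "0 < emb_num x y"
  shows "set x \<subseteq> set y"
proof
  fix a assume "a \<in> set x"
  then obtain j where j: "j < length x" "x ! j = a" by (auto simp: in_set_conv_nth)
  obtain "is" where "is \<in> embeddings x y"
    using assms by (auto simp: emb_num_eq_card_embeddings card_gt_0_iff)
  then have "is ! j < length y" "y ! (is ! j) = a"
    using j unfolding embeddings_def by auto
  then show "a \<in> set y" by (metis nth_mem)
qed

lemma emb_num_replicate_eq_0:
  assumes "length x = n" "x \<noteq> replicate n a"
  shows "emb_num x (replicate m a) = 0"
proof (rule ccontr)
  assume "emb_num x (replicate m a) \<noteq> 0"
  then have "set x \<subseteq> set (replicate m a)" by (simp add: emb_num_pos_imp_set_subset)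
  also have "\<dots> \<subseteq> {a}" by auto
  finally have "replicate (length x) a = x" by (auto intro: replicate_length_same)
  then show False using assms by simp
qed

definition del_at :: "nat \<Rightarrow> 'a list \<Rightarrow> 'a list" where
  "del_at k y = take k y @ drop (Suc k) y"

lemma subseq_del_at: "subseq (del_at k y) y"
proof -
  have "subseq (drop (Suc k) y) (drop k y)"
    using suffix_imp_subseq suffix_drop[of 1 "drop k y"] by simp
  then have "subseq (take k y @ drop (Suc k) y) (take k y @ drop k y)"
    by (simp only: subseq_append')
  then show ?thesis by (simp add: del_at_def)
qed

lemma del_at_adjacent_neq:
  assumes "Suc i < length y" "y ! i \<noteq> y ! Suc i"
  shows "del_at i y \<noteq> del_at (Suc i) y"
proof
  assume "del_at i y = del_at (Suc i) y"
  then have "del_at i y ! i = del_at (Suc i) y ! i" by simp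
  then show False using assms by (simp add: del_at_def nth_append)
qed

lemma del_at_in_seqs: "y \<in> seqs q (Suc n) \<Longrightarrow> k < Suc n \<Longrightarrow> del_at k y \<in> seqs q n"
  unfolding seqs_def del_at_def by (auto dest: in_set_takeD in_set_dropD)

lemma num_runs_eq_1_iff:
  "num_runs y = 1 \<longleftrightarrow> y \<noteq> [] \<and> (\<forall>i. Suc i < length y \<longrightarrow> y ! i = y ! Suc i)"
proof -
  have "finite {i. Suc i < length y \<and> y ! i \<noteq> y ! Suc i}"
    by (rule finite_subset[of _ "{..<length y}"]) auto
  then show ?thesis unfolding num_runs_def by auto
qed

lemma finite_seqs: "finite (seqs q n)"
proof -
  have "seqs q n = {xs. set xs \<subseteq> {0..<q} \<and> length xs = n}" unfolding seqs_def by auto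
  then show ?thesis using finite_lists_length_eq[of "{0..<q}" n] by simp
qed

lemma input_entropy_eq_weight_entropy:
  assumes "0 < q"
  shows "input_entropy q n 1 y = weight_entropy (\<lambda>x. real (emb_num x y)) (seqs q n)"
proof -
  define c where "c = real (Suc n) * real q"
  have "c > 0" using assms by (simp add: c_def)
  have ins_prob_eq: "ins_prob q 1 y x = real (emb_num x y) / c" if "x \<in> seqs q n" for x
    using that unfolding ins_prob_def c_def seqs_def by simp
  then have "(\<Sum>x'\<in>seqs q n. ins_prob q 1 y x') = (\<Sum>x'\<in>seqs q n. real (emb_num x' y)) / c"
    by (simp add: sum_divide_distrib)
  then have "post_prob q n 1 y x = real (emb_num x y) / (\<Sum>x'\<in>seqs q n. real (emb_num x' y))"
    if "x \<in> seqs q n" for x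
    unfolding post_prob_def using ins_prob_eq[OF that] \<open>c > 0\<close> by simp
  then show ?thesis unfolding input_entropy_def weight_entropy_def by simp
qed

lemma input_entropy_nonneg: "0 < q \<Longrightarrow> 0 \<le> input_entropy q n 1 y"
  unfolding input_entropy_eq_weight_entropy by (simp add: weight_entropy_nonneg finite_seqs)

lemma input_entropy_replicate:
  assumes "0 < q"
  shows "input_entropy q n 1 (replicate (Suc n) a) = 0"
proof -
  have "x = replicate n a" if "x \<in> seqs q n" "emb_num x (replicate (Suc n) a) \<noteq> 0" for x
    using that emb_num_replicate_eq_0[of x n a "Suc n"] by (auto simp: seqs_def)
  then show ?thesis unfolding input_entropy_eq_weight_entropy[OF assms]
    by (intro weight_entropy_eq_0_if_single_support[OF finite_seqs, where z = "replicate n a"]) simp_all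
qed

lemma input_entropy_pos_if_runs_neq_1:
  assumes "0 < q" "y \<in> seqs q (Suc n)" "num_runs y \<noteq> 1"
  shows "0 < input_entropy q n 1 y"
proof -
  have "length y = Suc n" using assms(2) by (simp add: seqs_def)
  then obtain i where i: "Suc i < length y" "y ! i \<noteq> y ! Suc i"
    using assms(3) num_runs_eq_1_iff by fastforce
  show ?thesis unfolding input_entropy_eq_weight_entropy[OF \<open>0 < q\<close>]
  proof (rule weight_entropy_pos)
    show "del_at i y \<in> seqs q n" "del_at (Suc i) y \<in> seqs q n"
      using assms(2) i \<open>length y = Suc n\<close> by (simp_all add: del_at_in_seqs)
    show "del_at i y \<noteq> del_at (Suc i) y" using i by (rule del_at_adjacent_neq)
  qed (simp_all add: finite_seqs subseq_imp_emb_num_pos subseq_del_at)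
qed

theorem theorem8:
  fixes q n :: nat
  assumes "q \<ge> 2" and "n \<ge> 1"
  shows "Min (input_entropy q n 1 ` seqs q (n + 1)) = 0
    \<and> (\<forall>y\<in>seqs q (n + 1). input_entropy q n 1 y = Min (input_entropy q n 1 ` seqs q (n + 1))
          \<longrightarrow> num_runs y = 1)"
proof -
  have "0 < q" using assms(1) by simp
  have "replicate (Suc n) 0 \<in> seqs q (n + 1)" using \<open>0 < q\<close> by (auto simp: seqs_def)
  then have min_eq_0: "Min (input_entropy q n 1 ` seqs q (n + 1)) = 0"
    using input_entropy_replicate[OF \<open>0 < q\<close>] input_entropy_nonneg[OF \<open>0 < q\<close>]
    by (intro Min_eqI) (auto simp: finite_seqs intro!: rev_image_eqI)
  moreover have "num_runs y = 1" if "y \<in> seqs q (Suc n)" "input_entropy q n 1 y = 0" for y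
    using input_entropy_pos_if_runs_neq_1[OF \<open>0 < q\<close> that(1)] that(2) by linarith
  ultimately show ?thesis by simp
qed

end
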